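(* Let $n\ge1$, $\tau:=2n+3$, $K>0$, $a\in(0,1)$, $\rho_0>0$, $\sigma_0>0$, and let $0<\epsilon_0\le aK^{-1}(2\pi)^{-2\tau}$. Then there exists a real sequence $\{d_j\}_{j\in\mathbb{N}}$ with $0\le d_j\le1/6$ for all $j$ such that the sequences defined recursively by $$\epsilon_{j+1}:=Ka^{-1}d_j^{-\tau}\epsilon_j^2,\qquad (\rho_{j+1},\sigma_{j+1}):=(1-3d_j)(\rho_j,\sigma_j)$$ satisfy $\lim_{j\to\infty}\epsilon_j=0$ and $\rho_j\ge\rho_0/2$, $\sigma_j\ge\sigma_0/2$ for all $j$ (so the limits $\rho_*:=\rho_0/2$, $\sigma_*:=\sigma_0/2$ serve as strictly positive lower bounds). *)

theory Defs
  imports Complex_Main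
begin

primrec eps_seq :: "nat \<Rightarrow> real \<Rightarrow> real \<Rightarrow> (nat \<Rightarrow> real) \<Rightarrow> real \<Rightarrow> nat \<Rightarrow> real" where
  "eps_seq tau K a d e0 0 = e0"
| "eps_seq tau K a d e0 (Suc j) =
     K * inverse a * inverse (d j ^ tau) * (eps_seq tau K a d e0 j)\<^sup>2"

primrec shrink_seq :: "(nat \<Rightarrow> real) \<Rightarrow> real \<Rightarrow> nat \<Rightarrow> real" where
  "shrink_seq d r0 0 = r0"
| "shrink_seq d r0 (Suc j) = (1 - 3 * d j) * shrink_seq d r0 j"

end

theory Submission
  imports Defs "HOL-Analysis.Infinite_Products"
begin

text \<open>With the geometric step sizes d_j = 2^-j / 12, whose sum is 1/6, the Weierstrass product
  inequality gives prod (1 - 3 d_j) >= 1 - 3 sum d_j >= 1/2, so rho_j and sigma_j stay above half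
  their initial values. The epsilon recursion becomes eps_(j+1) = C B^j eps_j^2 with
  C = 12^tau K / a and B = 2^tau; once C B eps_0 <= 1, the quadratic gain beats the growth of B^j
  and eps_j <= eps_0 B^-j. That smallness condition, 24^tau K eps_0 / a <= 1, follows from the
  hypothesis because 24 <= (2 pi)^2.\<close>

lemma shrink_seq_eq_prod: "shrink_seq d r0 j = r0 * (\<Prod>i<j. 1 - 3 * d i)"
  by (induction j) (simp_all add: mult_ac)

lemma shrink_seq_ge_one_minus_sum:
  fixes d :: "nat \<Rightarrow> real"
  assumes "r0 \<ge> 0" and "\<And>i. 0 \<le> d i \<and> d i \<le> 1 / 3"
  shows "shrink_seq d r0 j \<ge> r0 * (1 - 3 * (\<Sum>i<j. d i))"
proof -
  have "1 - (\<Sum>i<j. 3 * d i) \<le> (\<Prod>i<j. 1 - 3 * d i)"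
  proof (rule Weierstrass_prod_ineq)
    show "3 * d i \<in> {0..1}" for i
      using assms(2)[of i] by auto
  qed
  then show ?thesis
    using assms(1) by (simp add: shrink_seq_eq_prod sum_distrib_left mult_left_mono)
qed

lemma eps_seq_nonneg:
  assumes "K \<ge> 0" and "a \<ge> 0" and "\<And>i. d i \<ge> 0" and "e0 \<ge> 0"
  shows "eps_seq tau K a d e0 j \<ge> 0"
  using assms by (induction j) simp_all

lemma quadratic_recursion_le_geometric:
  fixes e :: "nat \<Rightarrow> real"
  assumes nonneg: "\<And>j. e j \<ge> 0" and "C \<ge> 0" and "B > 0"
    and step: "\<And>j. e (Suc j) \<le> C * B ^ j * (e j)\<^sup>2"
    and small: "C * B * e 0 \<le> 1"
  shows "e j \<le> e 0 / B ^ j"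
proof (induction j)
  case 0
  then show ?case by simp
next
  case (Suc j)
  have "e (Suc j) \<le> C * B ^ j * (e j)\<^sup>2" by (rule step)
  also have "\<dots> \<le> C * B ^ j * (e 0 / B ^ j)\<^sup>2"
    using Suc nonneg \<open>C \<ge> 0\<close> \<open>B > 0\<close> by (intro mult_left_mono power_mono) auto
  also have "\<dots> = (C * B * e 0) * (e 0 / B ^ Suc j)"
    using \<open>B > 0\<close> by (simp add: field_simps power2_eq_square)
  also have "\<dots> \<le> e 0 / B ^ Suc j"
    using small nonneg[of 0] \<open>C \<ge> 0\<close> \<open>B > 0\<close> by (intro mult_left_le_one_le) auto
  finally show ?case .
qed

lemma eps_seq_geometric_Suc:
  fixes K a e0 :: real
  shows "eps_seq tau K a (\<lambda>j. 1 / 12 * (1 / 2) ^ j) e0 (Suc j)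
     = (K / a * 12 ^ tau) * (2 ^ tau) ^ j * (eps_seq tau K a (\<lambda>j. 1 / 12 * (1 / 2) ^ j) e0 j)\<^sup>2"
proof -
  have "((2 :: real) ^ j) ^ tau = (2 ^ tau) ^ j"
    by (simp only: power_mult[symmetric] mult.commute)
  then have "(1 / 12 * (1 / 2) ^ j) ^ tau = 1 / ((12 :: real) ^ tau * (2 ^ tau) ^ j)"
    by (simp add: power_mult_distrib power_one_over)
  then have "inverse ((1 / 12 * (1 / 2) ^ j) ^ tau) = (12 :: real) ^ tau * (2 ^ tau) ^ j"
    by simp
  then show ?thesis
    unfolding eps_seq.simps by (simp only: divide_inverse mult.assoc)
qed

lemma twenty_four_le_two_pi_squared: "(24 :: real) \<le> (2 * pi)\<^sup>2"
proof -
  have "(6 :: real)\<^sup>2 \<le> (2 * pi)\<^sup>2"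
    using pi_gt3 by (intro power_mono) auto
  then show ?thesis by simp
qed

lemma shrink_seq_geometric_ge_half:
  fixes r0 :: real
  assumes "r0 \<ge> 0"
  shows "shrink_seq (\<lambda>j. 1 / 12 * (1 / 2) ^ j) r0 j \<ge> r0 / 2"
proof -
  have "(\<Sum>i<j. (1 / 2 :: real) ^ i) < 2"
    using geometric_sum_less[of "1 / 2 :: real" "{..<j}"] by simp
  then have "3 * (\<Sum>i<j. 1 / 12 * (1 / 2 :: real) ^ i) \<le> 1 / 2"
    by (simp add: sum_divide_distrib[symmetric])
  then have "r0 / 2 \<le> r0 * (1 - 3 * (\<Sum>i<j. 1 / 12 * (1 / 2 :: real) ^ i))"
    using assms mult_left_mono[of "1 / 2" _ r0] by simp
  also have "\<dots> \<le> shrink_seq (\<lambda>j. 1 / 12 * (1 / 2) ^ j) r0 j"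
  proof (rule shrink_seq_ge_one_minus_sum[OF assms])
    fix i
    have "0 \<le> (1 / 2 :: real) ^ i" "(1 / 2 :: real) ^ i \<le> 1"
      by (simp_all add: power_le_one)
    then show "0 \<le> 1 / 12 * (1 / 2 :: real) ^ i \<and> 1 / 12 * (1 / 2 :: real) ^ i \<le> 1 / 3"
      by linarith
  qed
  finally show ?thesis .
qed

lemma eps_seq_geometric_tendsto_zero:
  fixes K a e0 :: real
  assumes "K > 0" and "a > 0" and "e0 \<ge> 0" and "tau > 0"
    and small: "K / a * 24 ^ tau * e0 \<le> 1"
  shows "eps_seq tau K a (\<lambda>j. 1 / 12 * (1 / 2) ^ j) e0 \<longlonglongrightarrow> 0"
proof -
  let ?e = "eps_seq tau K a (\<lambda>j. 1 / 12 * (1 / 2) ^ j) e0"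
  have nonneg: "?e j \<ge> 0" for j
    using assms by (intro eps_seq_nonneg) auto
  have "(12 :: real) ^ tau * 2 ^ tau = 24 ^ tau"
    by (simp flip: power_mult_distrib)
  then have CB: "K / a * 12 ^ tau * 2 ^ tau * ?e 0 \<le> 1"
    using small by (simp add: mult.assoc)
  have bound: "?e j \<le> e0 / (2 ^ tau) ^ j" for j
    using quadratic_recursion_le_geometric[of ?e "K / a * 12 ^ tau" "2 ^ tau",
        OF nonneg _ _ eq_refl[OF eps_seq_geometric_Suc] CB] assms
    by simp
  have lim: "(\<lambda>j. e0 / (2 ^ tau) ^ j) \<longlonglongrightarrow> 0"
    using \<open>tau > 0\<close> by (intro LIMSEQ_divide_realpow_zero) (simp add: one_less_power)
  have lower: "\<forall>\<^sub>F j in sequentially. 0 \<le> ?e j"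
    using nonneg by (simp add: always_eventually)
  have upper: "\<forall>\<^sub>F j in sequentially. ?e j \<le> e0 / (2 ^ tau) ^ j"
    using bound by (simp add: always_eventually)
  show ?thesis
    using real_tendsto_sandwich[OF lower upper tendsto_const lim] .
qed

theorem lemma2:
  fixes n :: nat and K a rho0 sigma0 eps0 :: real
  assumes "n \<ge> 1"
    and "K > 0" and "0 < a" and "a < 1"
    and "rho0 > 0" and "sigma0 > 0"
    and "0 < eps0" and "eps0 \<le> a * inverse K * inverse ((2 * pi) ^ (2 * (2 * n + 3)))"
  shows "\<exists>d :: nat \<Rightarrow> real.
           (\<forall>j. 0 < d j \<and> d j \<le> 1 / 6) \<and>
           (eps_seq (2 * n + 3) K a d eps0 \<longlonglongrightarrow> 0) \<and>
           (\<forall>j. shrink_seq d rho0 j \<ge> rho0 / 2) \<and>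
           (\<forall>j. shrink_seq d sigma0 j \<ge> sigma0 / 2)"
proof (intro exI[of _ "\<lambda>j. 1 / 12 * (1 / 2) ^ j"] conjI allI)
  let ?tau = "2 * n + 3"
  define P :: real where "P = (2 * pi) ^ (2 * ?tau)"
  have "P > 0"
    unfolding P_def by simp
  have "(24 :: real) ^ ?tau \<le> P"
    unfolding P_def power_mult by (intro power_mono twenty_four_le_two_pi_squared) simp
  then have "K / a * 24 ^ ?tau * eps0 \<le> K / a * P * eps0"
    using assms(2,3,7) by (intro mult_right_mono mult_left_mono) auto
  also have "\<dots> \<le> K / a * P * (a * inverse K * inverse P)"
    using assms(8) \<open>P > 0\<close> assms(2,3) unfolding P_def[symmetric] by (intro mult_left_mono) auto
  also have "\<dots> = 1"
    using \<open>P > 0\<close> assms(2,3) by (simp add: field_simps)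
  finally show "eps_seq ?tau K a (\<lambda>j. 1 / 12 * (1 / 2) ^ j) eps0 \<longlonglongrightarrow> 0"
    using assms(2,3,7) by (intro eps_seq_geometric_tendsto_zero) auto
next
  fix j
  have "(1 / 2 :: real) ^ j \<le> 1"
    by (simp add: power_le_one)
  then show "1 / 12 * (1 / 2 :: real) ^ j \<le> 1 / 6"
    by simp
next
  show "shrink_seq (\<lambda>j. 1 / 12 * (1 / 2) ^ j) rho0 j \<ge> rho0 / 2" for j
    using assms(5) by (intro shrink_seq_geometric_ge_half) simp
  show "shrink_seq (\<lambda>j. 1 / 12 * (1 / 2) ^ j) sigma0 j \<ge> sigma0 / 2" for j
    using assms(6) by (intro shrink_seq_geometric_ge_half) simp
qed simp

end
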